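(* For every $n\geq 4$, \[\widehat{\mathsf{g}}(K_n^3)\geq \left\lceil\frac{(n-2)(n+3)(n-4)}{12}\right\rceil.\]
   Context: $K_n^3$ is the complete $3$-uniform hypergraph on vertex set $[n]$ (edges: all $3$-element subsets). Its Levi graph $L_n$ is the bipartite graph with vertex set $[n]\sqcup\binom{[n]}{3}$, $i$ adjacent to triple $t$ iff $i\in t$. The Euler genus of a graph $G$ is $\widehat{\mathsf{g}}(G)=\min\{2\mathsf{g}(G),\widetilde{\mathsf{g}}(G)\}$ where $\mathsf{g}$ is the orientable genus and $\widetilde{\mathsf{g}}$ the non-orientable genus (0 for planar graphs); $\widehat{\mathsf{g}}(K_n^3):=\widehat{\mathsf{g}}(L_n)$. *)

theory Defs
  imports Complex_Main
begin

text \<open>Graphs are given by a finite vertex set V and a symmetric, irreflexive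
adjacency relation E (only pairs inside V count).  The Euler genus of a connected
graph is defined combinatorially via embedding schemes (general rotation systems):
a rotation (a cyclic permutation of the neighbours of every vertex) together with
an edge signature (twisted / untwisted).  Faces are found by the standard face
tracing procedure on states (dart, local orientation); every face is traced exactly
twice (once in each direction), so the number of faces is half the number of orbits.
The Euler genus of the scheme is 2 - |V| + |E| - |F|, and the Euler genus of the
graph is the minimum over all schemes, which equals min(2 g, non-orientable genus).\<close>

definition nbrs :: "'a set \<Rightarrow> ('a \<Rightarrow> 'a \<Rightarrow> bool) \<Rightarrow> 'a \<Rightarrow> 'a set" where
  "nbrs V E v = {w \<in> V. E v w}"

definition darts :: "'a set \<Rightarrow> ('a \<Rightarrow> 'a \<Rightarrow> bool) \<Rightarrow> ('a \<times> 'a) set" where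
  "darts V E = {(u, w). u \<in> V \<and> w \<in> V \<and> E u w}"

definition graph_edges :: "'a set \<Rightarrow> ('a \<Rightarrow> 'a \<Rightarrow> bool) \<Rightarrow> 'a set set" where
  "graph_edges V E = {{u, w} | u w. (u, w) \<in> darts V E}"

definition is_rotation :: "'a set \<Rightarrow> ('a \<Rightarrow> 'a \<Rightarrow> bool) \<Rightarrow> ('a \<Rightarrow> 'a \<Rightarrow> 'a) \<Rightarrow> bool" where
  "is_rotation V E rot \<longleftrightarrow>
     (\<forall>v\<in>V. bij_betw (rot v) (nbrs V E v) (nbrs V E v) \<and>
        (\<forall>x\<in>nbrs V E v. \<forall>y\<in>nbrs V E v. \<exists>k. (rot v ^^ k) x = y))"

text \<open>An edge signature: tw u w = True means the edge uw is twisted (sign -1).\<close>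
definition is_signature :: "('a \<Rightarrow> 'a \<Rightarrow> bool) \<Rightarrow> bool" where
  "is_signature tw \<longleftrightarrow> (\<forall>u w. tw u w = tw w u)"

text \<open>Face tracing step on states (u, w, s): currently traversing dart u -> w with
local orientation s (True = clockwise).\<close>
definition face_step ::
  "'a set \<Rightarrow> ('a \<Rightarrow> 'a \<Rightarrow> bool) \<Rightarrow> ('a \<Rightarrow> 'a \<Rightarrow> 'a) \<Rightarrow> ('a \<Rightarrow> 'a \<Rightarrow> bool)
     \<Rightarrow> 'a \<times> 'a \<times> bool \<Rightarrow> 'a \<times> 'a \<times> bool" where
  "face_step V E rot tw = (\<lambda>(u, w, s).
     let s' = (if tw u w then \<not> s else s)
     in (w, (if s' then rot w u else inv_into (nbrs V E w) (rot w) u), s'))"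

definition orbits_of :: "('b \<Rightarrow> 'b) \<Rightarrow> 'b set \<Rightarrow> 'b set set" where
  "orbits_of f S = (\<lambda>x. {(f ^^ k) x | k. True}) ` S"

definition num_faces ::
  "'a set \<Rightarrow> ('a \<Rightarrow> 'a \<Rightarrow> bool) \<Rightarrow> ('a \<Rightarrow> 'a \<Rightarrow> 'a) \<Rightarrow> ('a \<Rightarrow> 'a \<Rightarrow> bool) \<Rightarrow> nat" where
  "num_faces V E rot tw =
     card (orbits_of (face_step V E rot tw) {(u, w, s). (u, w) \<in> darts V E}) div 2"

definition scheme_euler_genus ::
  "'a set \<Rightarrow> ('a \<Rightarrow> 'a \<Rightarrow> bool) \<Rightarrow> ('a \<Rightarrow> 'a \<Rightarrow> 'a) \<Rightarrow> ('a \<Rightarrow> 'a \<Rightarrow> bool) \<Rightarrow> int" where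
  "scheme_euler_genus V E rot tw =
     2 - int (card V) + int (card (graph_edges V E)) - int (num_faces V E rot tw)"

definition euler_genus :: "'a set \<Rightarrow> ('a \<Rightarrow> 'a \<Rightarrow> bool) \<Rightarrow> int" where
  "euler_genus V E =
     Min {scheme_euler_genus V E rot tw | rot tw. is_rotation V E rot \<and> is_signature tw}"

text \<open>Levi graph of the complete 3-uniform hypergraph on [n] = {1..n}.\<close>
definition triples :: "nat \<Rightarrow> nat set set" where
  "triples n = {t. t \<subseteq> {1..n} \<and> card t = 3}"

definition levi_V :: "nat \<Rightarrow> (nat + nat set) set" where
  "levi_V n = Inl ` {1..n} \<union> Inr ` triples n"

fun levi_E :: "nat \<Rightarrow> (nat + nat set) \<Rightarrow> (nat + nat set) \<Rightarrow> bool" where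
  "levi_E n (Inl i) (Inr t) = (i \<in> {1..n} \<and> t \<in> triples n \<and> i \<in> t)"
| "levi_E n (Inr t) (Inl i) = (i \<in> {1..n} \<and> t \<in> triples n \<and> i \<in> t)"
| "levi_E n _ _ = False"

end

theory Submission
  imports Defs "HOL-Combinatorics.Orbits" "HOL-Combinatorics.Cycles"
begin

text \<open>The Levi graph \<open>L\<^sub>n\<close> is bipartite, and for \<open>n \<ge> 4\<close> each of its vertices has degree
at least 2. In any embedding scheme, face tracing therefore alternates between the two sides and
never turns back along the edge it arrived on, so every facial walk has length at least 4.
Counting darts gives \<open>4F \<le> 2|E|\<close>, and Euler's formula yields Euler genus at least
\<open>2 - |V| + |E|/2 = 2 - n + C(n,3)/2 = (n-2)(n+3)(n-4)/12\<close>.\<close>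

lemma funpow_perm_restrict:
  assumes "f ` S \<subseteq> S" "x \<in> S"
  shows "(perm_restrict f S ^^ k) x = (f ^^ k) x"
proof -
  have "(f ^^ i) x \<in> S" for i by (induction i) (use assms in auto)
  then show ?thesis
    by (induction k) (simp_all add: perm_restrict_simps)
qed

lemma disjoint_orbits:
  assumes perm: "permutation g"
  shows "disjoint (orbit g ` S)"
proof (rule disjointI)
  have same_orbit: "orbit g z = orbit g x" if "z \<in> orbit g x" for x z
    using cyclic_on_orbit'[OF perm, of x] that by (simp add: cyclic_on_alldef)
  fix A B assume "A \<in> orbit g ` S" "B \<in> orbit g ` S" "A \<noteq> B"
  then show "A \<inter> B = {}"
    using same_orbit by (metis disjoint_iff imageE)
qed

lemma card_orbit_ge:
  assumes perm: "permutation g" and no_short_cycle: "\<And>k. 0 < k \<Longrightarrow> k < m \<Longrightarrow> (g ^^ k) x \<noteq> x"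
  shows "m \<le> card (orbit g x)"
proof -
  have "inj_on (\<lambda>k. (g ^^ k) x) {..<m}"
  proof (rule linorder_inj_onI')
    fix i j assume "i \<in> {..<m}" "j \<in> {..<m}" "i < j"
    show "(g ^^ i) x \<noteq> (g ^^ j) x"
    proof
      assume "(g ^^ i) x = (g ^^ j) x"
      then have "(g ^^ (j - i)) x = x"
        using funpow_diff[OF permutation_bijective[OF perm, THEN bij_is_inj]] \<open>i < j\<close> by simp
      moreover have "0 < j - i" "j - i < m"
        using \<open>i < j\<close> \<open>j \<in> {..<m}\<close> by auto
      ultimately show False
        using no_short_cycle by simp
    qed
  qed
  moreover have "(\<lambda>k. (g ^^ k) x) ` {..<m} \<subseteq> orbit g x"
    by (auto simp: orbit_altdef_permutation[OF perm])
  moreover have "finite (orbit g x)"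
    using finite_orbit[OF permutation_self_in_orbit[OF perm]] .
  ultimately show ?thesis
    using card_inj_on_le[of "\<lambda>k. (g ^^ k) x" "{..<m}" "orbit g x"] by simp
qed

lemma card_orbits_of_le:
  assumes fin: "finite S" and maps: "f ` S \<subseteq> S" and inj: "inj_on f S"
    and no_short_cycle: "\<And>x k. x \<in> S \<Longrightarrow> 0 < k \<Longrightarrow> k < m \<Longrightarrow> (f ^^ k) x \<noteq> x"
  shows "m * card (orbits_of f S) \<le> card S"
proof -
  define g where "g = perm_restrict f S"
  have g_iter: "(g ^^ k) x = (f ^^ k) x" if "x \<in> S" for x k
    unfolding g_def using funpow_perm_restrict[OF maps that] .
  have "bij_betw f S S"
    using endo_inj_surj[OF fin maps inj] inj by (simp add: bij_betw_def)
  then have "g permutes S"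
    by (intro bij_imp_permutes) (auto simp: g_def perm_restrict_simps cong: bij_betw_cong)
  then have perm: "permutation g"
    using fin permutation_permutes by blast
  have orbits: "orbits_of f S = orbit g ` S"
    unfolding orbits_of_def orbit_altdef_permutation[OF perm] using g_iter
    by (intro image_cong) auto
  have orbit_sub: "orbit g x \<subseteq> S" if "x \<in> S" for x
    using permutes_orbit_subset[OF \<open>g permutes S\<close> that] .
  have "m * card (orbit g ` S) \<le> (\<Sum>A\<in>orbit g ` S. card A)"
  proof -
    have "m \<le> card A" if "A \<in> orbit g ` S" for A
      using that card_orbit_ge[OF perm] no_short_cycle g_iter by auto
    then show ?thesis
      using sum_bounded_below[of "orbit g ` S" m card] by (simp add: mult.commute)
  qed
  also have "\<dots> = card (\<Union> (orbit g ` S))"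
    using disjoint_orbits[OF perm] orbit_sub fin
    by (intro card_Union_disjoint[symmetric]) (auto intro: finite_subset)
  also have "\<dots> \<le> card S"
    using orbit_sub fin by (intro card_mono) auto
  finally show ?thesis unfolding orbits .
qed

definition face_states :: "'a set \<Rightarrow> ('a \<Rightarrow> 'a \<Rightarrow> bool) \<Rightarrow> ('a \<times> 'a \<times> bool) set" where
  "face_states V E = {(u, w, s). (u, w) \<in> darts V E}"

lemma num_faces_face_states:
  "num_faces V E rot tw = card (orbits_of (face_step V E rot tw) (face_states V E)) div 2"
  by (simp add: num_faces_def face_states_def)

lemma finite_darts: "finite V \<Longrightarrow> finite (darts V E)"
  by (rule finite_subset[of _ "V \<times> V"]) (auto simp: darts_def)

lemma face_states_eq_image:
  "face_states V E = (\<lambda>((u, w), s). (u, w, s)) ` (darts V E \<times> UNIV)"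
  by (force simp: face_states_def)

lemma finite_face_states: "finite V \<Longrightarrow> finite (face_states V E)"
  by (simp add: face_states_eq_image finite_darts)

lemma card_face_states: "finite V \<Longrightarrow> card (face_states V E) = 2 * card (darts V E)"
  unfolding face_states_eq_image
  by (subst card_image) (auto simp: inj_on_def card_cartesian_product finite_darts)

lemma rotation_bij:
  "is_rotation V E rot \<Longrightarrow> w \<in> V \<Longrightarrow> bij_betw (rot w) (nbrs V E w) (nbrs V E w)"
  by (simp add: is_rotation_def)

lemma rotation_no_fixpoint:
  assumes rot: "is_rotation V E rot" and "w \<in> V" and u: "u \<in> nbrs V E w"
    and x: "x \<in> nbrs V E w" "x \<noteq> u"
  shows "rot w u \<noteq> u"
proof
  assume "rot w u = u"
  then have "(rot w ^^ k) u = u" for k by (induction k) simp_all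
  moreover obtain k where "(rot w ^^ k) u = x"
    using rot \<open>w \<in> V\<close> u x(1) unfolding is_rotation_def by blast
  ultimately show False using x(2) by simp
qed

lemma rotation_inv_no_fixpoint:
  assumes rot: "is_rotation V E rot" and "w \<in> V" and u: "u \<in> nbrs V E w"
    and x: "x \<in> nbrs V E w" "x \<noteq> u"
  shows "inv_into (nbrs V E w) (rot w) u \<noteq> u"
proof
  assume "inv_into (nbrs V E w) (rot w) u = u"
  moreover have "rot w (inv_into (nbrs V E w) (rot w) u) = u"
    using rotation_bij[OF rot \<open>w \<in> V\<close>] u by (simp add: bij_betw_def f_inv_into_f)
  ultimately show False
    using rotation_no_fixpoint[OF assms] by simp
qed

context
  fixes V :: "'a set" and E :: "'a \<Rightarrow> 'a \<Rightarrow> bool"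
    and rot :: "'a \<Rightarrow> 'a \<Rightarrow> 'a" and tw :: "'a \<Rightarrow> 'a \<Rightarrow> bool"
  assumes symmetric: "\<And>u w. E u w = E w u" and rot: "is_rotation V E rot"
begin

lemma face_step_in_face_states:
  assumes "(u, w, s) \<in> face_states V E"
  obtains x s' where "face_step V E rot tw (u, w, s) = (w, x, s')" "(w, x, s') \<in> face_states V E"
    and "\<And>z. z \<in> nbrs V E w \<Longrightarrow> z \<noteq> u \<Longrightarrow> x \<noteq> u"
proof -
  have w: "w \<in> V" and u: "u \<in> nbrs V E w"
    using assms symmetric by (auto simp: face_states_def darts_def nbrs_def)
  have bij: "bij_betw (rot w) (nbrs V E w) (nbrs V E w)"
    using rotation_bij[OF rot w] .
  have "rot w u \<in> nbrs V E w" "inv_into (nbrs V E w) (rot w) u \<in> nbrs V E w"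
    using bij u bij_betw_inv_into by (blast dest: bij_betwE)+
  then show thesis
    using that rotation_no_fixpoint[OF rot w u] rotation_inv_no_fixpoint[OF rot w u] w
    by (auto simp: face_step_def Let_def face_states_def darts_def nbrs_def)
qed

lemma inj_on_face_step: "inj_on (face_step V E rot tw) (face_states V E)"
proof (rule inj_onI)
  fix y1 y2 assume y: "y1 \<in> face_states V E" "y2 \<in> face_states V E"
    and eq: "face_step V E rot tw y1 = face_step V E rot tw y2"
  obtain u1 w1 s1 u2 w2 s2 where y1: "y1 = (u1, w1, s1)" and y2: "y2 = (u2, w2, s2)"
    by (cases y1, cases y2)
  have "w1 = w2" using eq by (simp add: y1 y2 face_step_def Let_def)
  have u: "u1 \<in> nbrs V E w1" "u2 \<in> nbrs V E w1" and w: "w1 \<in> V"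
    using y symmetric \<open>w1 = w2\<close> by (auto simp: y1 y2 face_states_def darts_def nbrs_def)
  have bij: "bij_betw (rot w1) (nbrs V E w1) (nbrs V E w1)"
    using rotation_bij[OF rot w] .
  have "inj_on (rot w1) (nbrs V E w1)" "inj_on (inv_into (nbrs V E w1) (rot w1)) (nbrs V E w1)"
    using bij bij_betw_inv_into bij_betw_imp_inj_on by blast+
  then have "u1 = u2"
    using eq u \<open>w1 = w2\<close> by (auto simp: y1 y2 face_step_def Let_def split: if_splits dest: inj_onD)
  then show "y1 = y2"
    using eq \<open>w1 = w2\<close> by (auto simp: y1 y2 face_step_def Let_def split: if_splits)
qed

lemma face_step_no_short_cycle:
  fixes side :: "'a \<Rightarrow> bool"
  assumes bipartite: "\<And>u w. E u w \<Longrightarrow> side u \<noteq> side w"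
    and min_degree: "\<And>w. w \<in> V \<Longrightarrow> 2 \<le> card (nbrs V E w)"
    and y: "y \<in> face_states V E" and k: "0 < k" "k < 4"
  shows "(face_step V E rot tw ^^ k) y \<noteq> y"
proof -
  let ?f = "face_step V E rot tw"
  txt \<open>Each step moves the tail to the other side of the bipartition, which excludes cycles of
    odd length; a cycle of length 2 would turn back along the same edge, which minimum degree 2
    and the cyclicity of the rotation forbid.\<close>
  have step: "?f y \<in> face_states V E \<and> fst (?f y) = fst (snd y) \<and>
      fst (snd (?f y)) \<noteq> fst y \<and> side (fst (?f y)) \<noteq> side (fst y)"
    if "y \<in> face_states V E" for y
  proof -
    obtain u w s where y: "y = (u, w, s)" by (cases y)
    have "w \<in> V" "E u w" and u: "u \<in> nbrs V E w"
      using that symmetric by (auto simp: y face_states_def darts_def nbrs_def)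
    have "\<not> nbrs V E w \<subseteq> {u}"
      using min_degree[OF \<open>w \<in> V\<close>] card_mono[of "{u}" "nbrs V E w"] by auto
    then obtain z where "z \<in> nbrs V E w" "z \<noteq> u" by blast
    with face_step_in_face_states[of u w s] that show ?thesis
      using bipartite[OF \<open>E u w\<close>] unfolding y by (metis fst_conv snd_conv)
  qed
  have "?f y \<in> face_states V E" "?f (?f y) \<in> face_states V E"
    using step y by blast+
  note steps = step[OF y] step[OF this(1)] step[OF this(2)]
  consider "k = 1" | "k = 2" | "k = 3" using k by linarith
  then show ?thesis
  proof cases
    case 1
    then show ?thesis using steps by auto
  next
    case 2
    then show ?thesis using steps by (auto simp: numeral_2_eq_2)
  next
    case 3
    then show ?thesis using steps by (auto simp: numeral_3_eq_3)
  qed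
qed

lemma four_num_faces_le_card_darts:
  fixes side :: "'a \<Rightarrow> bool"
  assumes "finite V"
    and bipartite: "\<And>u w. E u w \<Longrightarrow> side u \<noteq> side w"
    and min_degree: "\<And>w. w \<in> V \<Longrightarrow> 2 \<le> card (nbrs V E w)"
  shows "4 * num_faces V E rot tw \<le> card (darts V E)"
proof -
  let ?O = "orbits_of (face_step V E rot tw) (face_states V E)"
  have "4 * card ?O \<le> card (face_states V E)"
    using finite_face_states[OF \<open>finite V\<close>] inj_on_face_step
      face_step_no_short_cycle[OF bipartite min_degree]
    by (intro card_orbits_of_le) (auto elim: face_step_in_face_states)
  then show ?thesis
    using card_face_states[OF \<open>finite V\<close>] by (simp add: num_faces_face_states)
qed

end

lemma cyclic_permutation_exists:
  assumes "finite N"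
  shows "\<exists>r. bij_betw r N N \<and> (\<forall>x\<in>N. \<forall>y\<in>N. \<exists>k. (r ^^ k) x = y)"
proof -
  obtain xs where xs: "set xs = N" "distinct xs"
    using finite_distinct_list[OF assms] by blast
  let ?r = "cycle_of_list xs"
  have "bij_betw ?r N N"
    using cycle_permutes[of xs] xs(1) permutes_imp_bij by blast
  moreover have "\<exists>k. (?r ^^ k) x = y" if "x \<in> N" "y \<in> N" for x y
  proof -
    obtain i where i: "i < length xs" "x = xs ! i"
      using \<open>x \<in> N\<close> xs(1) by (auto simp: in_set_conv_nth)
    obtain j where j: "j < length xs" "y = xs ! j"
      using \<open>y \<in> N\<close> xs(1) by (auto simp: in_set_conv_nth)
    define k where "k = j + length xs - i"
    have "(?r ^^ k) x = map (?r ^^ k) xs ! i"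
      using i by simp
    also have "\<dots> = rotate k xs ! i"
      by (simp add: cyclic_rotation[OF xs(2)])
    also have "\<dots> = y"
      using i j by (simp add: nth_rotate k_def)
    finally show ?thesis ..
  qed
  ultimately show ?thesis by blast
qed

lemma rotation_exists:
  assumes "finite V"
  obtains rot where "is_rotation V E rot"
proof -
  have "\<forall>v. \<exists>r. bij_betw r (nbrs V E v) (nbrs V E v) \<and>
      (\<forall>x\<in>nbrs V E v. \<forall>y\<in>nbrs V E v. \<exists>k. (r ^^ k) x = y)"
    using assms by (intro allI cyclic_permutation_exists) (simp add: nbrs_def)
  then obtain rot where "\<forall>v. bij_betw (rot v) (nbrs V E v) (nbrs V E v) \<and>
      (\<forall>x\<in>nbrs V E v. \<forall>y\<in>nbrs V E v. \<exists>k. (rot v ^^ k) x = y)"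
    by (rule choice[THEN exE])
  then show thesis
    using that unfolding is_rotation_def by blast
qed

lemma euler_genus_bipartite_lower_bound:
  fixes side :: "'a \<Rightarrow> bool"
  assumes "finite V" and symmetric: "\<And>u w. E u w = E w u"
    and bipartite: "\<And>u w. E u w \<Longrightarrow> side u \<noteq> side w"
    and min_degree: "\<And>w. w \<in> V \<Longrightarrow> 2 \<le> card (nbrs V E w)"
  shows "8 - 4 * int (card V) + 4 * int (card (graph_edges V E)) - int (card (darts V E))
    \<le> 4 * euler_genus V E"
    (is "?lo \<le> _")
proof -
  define G where "G = {scheme_euler_genus V E rot tw | rot tw. is_rotation V E rot \<and> is_signature tw}"
  let ?hi = "2 - int (card V) + int (card (graph_edges V E))"
  have bounds: "?lo \<le> 4 * g \<and> g \<le> ?hi" if "g \<in> G" for g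
  proof -
    obtain rot tw where g: "g = scheme_euler_genus V E rot tw" and rot: "is_rotation V E rot"
      using \<open>g \<in> G\<close> by (auto simp: G_def)
    have "4 * num_faces V E rot tw \<le> card (darts V E)"
      by (rule four_num_faces_le_card_darts[OF symmetric rot \<open>finite V\<close> bipartite min_degree])
    then have "4 * int (num_faces V E rot tw) \<le> int (card (darts V E))"
      by linarith
    then show ?thesis
      unfolding g scheme_euler_genus_def by simp
  qed
  txt \<open>\<open>G\<close> is indexed by infinitely many schemes; its finiteness comes from these two bounds.\<close>
  have "G \<subseteq> {-\<bar>?lo\<bar> .. ?hi}"
    using bounds by fastforce
  then have "finite G"
    by (rule finite_subset) simp
  moreover obtain rot where "is_rotation V E rot"
    using rotation_exists[OF \<open>finite V\<close>] .
  then have "G \<noteq> {}"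
    unfolding G_def is_signature_def by blast
  ultimately have "Min G \<in> G" by (rule Min_in)
  then show ?thesis
    using bounds unfolding euler_genus_def G_def[symmetric] by blast
qed

lemma finite_triples: "finite (triples n)"
  by (rule finite_subset[of _ "Pow {1..n}"]) (auto simp: triples_def)

lemma card_triples: "card (triples n) = n choose 3"
  using n_subsets[of "{1..n}" 3] by (simp add: triples_def)

lemma six_choose_three: "6 * (n choose 3) = n * (n - 1) * (n - 2)"
proof (cases "n \<ge> 3")
  case True
  then obtain m where n: "n = m + 3"
    by (metis add.commute le_Suc_ex)
  have "fact m * (6 * (n choose 3)) = (fact n :: nat)"
    using binomial_fact_lemma[of 3 n] n by (simp add: fact_numeral algebra_simps)
  also have "\<dots> = fact m * (n * (n - 1) * (n - 2))"
    by (simp add: n numeral_eq_Suc algebra_simps)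
  finally show ?thesis by simp
next
  case False
  then show ?thesis by (auto simp: numeral_eq_Suc less_Suc_eq)
qed

lemma finite_levi_V: "finite (levi_V n)"
  by (simp add: levi_V_def finite_triples)

lemma card_levi_V: "card (levi_V n) = n + (n choose 3)"
  unfolding levi_V_def
  by (subst card_Un_disjoint) (auto simp: finite_triples card_image card_triples)

lemma levi_E_sym: "levi_E n u w = levi_E n w u"
  by (cases u; cases w) auto

lemma levi_E_bipartite: "levi_E n u w \<Longrightarrow> isl u \<noteq> isl w"
  by (cases u; cases w) auto

definition incidences :: "nat \<Rightarrow> (nat set \<times> nat) set" where
  "incidences n = (SIGMA t:triples n. t)"

lemma finite_incidences: "finite (incidences n)"
  unfolding incidences_def
  by (rule finite_SigmaI[OF finite_triples]) (auto simp: triples_def intro: finite_subset)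

lemma card_incidences: "card (incidences n) = 3 * (n choose 3)"
proof -
  have "card (incidences n) = (\<Sum>t\<in>triples n. card t)"
    unfolding incidences_def using finite_triples
    by (subst card_SigmaI) (auto simp: triples_def intro: finite_subset)
  also have "\<dots> = (\<Sum>t\<in>triples n. 3)"
    by (rule sum.cong) (auto simp: triples_def)
  finally show ?thesis
    by (simp add: card_triples)
qed

lemma darts_levi:
  "darts (levi_V n) (levi_E n) =
     (\<lambda>(t, i). (Inl i, Inr t)) ` incidences n \<union> (\<lambda>(t, i). (Inr t, Inl i)) ` incidences n"
proof (rule set_eqI)
  fix d :: "(nat + nat set) \<times> (nat + nat set)"
  obtain u w where d: "d = (u, w)" by (cases d)
  show "d \<in> darts (levi_V n) (levi_E n) \<longleftrightarrow>
      d \<in> (\<lambda>(t, i). (Inl i, Inr t)) ` incidences n \<union> (\<lambda>(t, i). (Inr t, Inl i)) ` incidences n"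
    unfolding d
    by (cases u; cases w) (auto simp: darts_def levi_V_def incidences_def triples_def image_iff)
qed

lemma card_darts_levi: "card (darts (levi_V n) (levi_E n)) = 6 * (n choose 3)"
proof -
  have "inj_on (\<lambda>(t, i). (Inl i, Inr t) :: (nat + nat set) \<times> (nat + nat set)) (incidences n)"
    "inj_on (\<lambda>(t, i). (Inr t, Inl i) :: (nat + nat set) \<times> (nat + nat set)) (incidences n)"
    by (auto simp: inj_on_def)
  then show ?thesis
    unfolding darts_levi
    by (subst card_Un_disjoint) (auto simp: finite_incidences card_image card_incidences)
qed

lemma graph_edges_levi:
  "graph_edges (levi_V n) (levi_E n) = (\<lambda>(t, i). {Inl i, Inr t}) ` incidences n"
proof -
  have "graph_edges (levi_V n) (levi_E n) = (\<lambda>(u, w). {u, w}) ` darts (levi_V n) (levi_E n)"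
    unfolding graph_edges_def by auto
  moreover have "(\<lambda>(u, w). {u, w}) ` (\<lambda>(t, i). (Inl i, Inr t)) ` incidences n =
      (\<lambda>(t, i). {Inl i, Inr t}) ` incidences n"
    "(\<lambda>(u, w). {u, w}) ` (\<lambda>(t, i). (Inr t, Inl i)) ` incidences n =
      (\<lambda>(t, i). {Inl i, Inr t}) ` incidences n"
    unfolding image_image by (auto intro!: image_cong simp: insert_commute)
  ultimately show ?thesis
    unfolding darts_levi image_Un by simp
qed

lemma card_graph_edges_levi: "card (graph_edges (levi_V n) (levi_E n)) = 3 * (n choose 3)"
proof -
  have "inj_on (\<lambda>(t, i). {Inl i, Inr t} :: (nat + nat set) set) (incidences n)"
    by (auto simp: inj_on_def doubleton_eq_iff)
  then show ?thesis
    by (simp add: graph_edges_levi card_image card_incidences)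
qed

lemma levi_min_degree:
  assumes "4 \<le> n" and w: "w \<in> levi_V n"
  shows "2 \<le> card (nbrs (levi_V n) (levi_E n) w)"
proof -
  have fin: "finite (nbrs (levi_V n) (levi_E n) w)"
    using finite_levi_V by (simp add: nbrs_def)
  show ?thesis
  proof (cases w)
    case (Inl i)
    then have i: "i \<in> {1..n}" using w by (auto simp: levi_V_def)
    have "3 \<le> card ({1..n} - {i})" using i \<open>4 \<le> n\<close> by simp
    then obtain a b c where abc: "{a, b, c} \<subseteq> {1..n} - {i}" "a \<noteq> b" "b \<noteq> c" "a \<noteq> c"
      by (metis obtain_subset_with_card_n card_3_iff)
    then have "{i, a, b} \<in> triples n" "{i, a, c} \<in> triples n"
      using i by (auto simp: triples_def)
    then have "{Inr {i, a, b}, Inr {i, a, c}} \<subseteq> nbrs (levi_V n) (levi_E n) w"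
      using i Inl by (auto simp: nbrs_def levi_V_def)
    moreover have "{i, a, b} \<noteq> {i, a, c}"
      using abc by blast
    then have "card {Inr {i, a, b}, Inr {i, a, c} :: nat + nat set} = 2"
      by simp
    ultimately show ?thesis
      using card_mono[OF fin] by metis
  next
    case (Inr t)
    then have t: "t \<in> triples n" using w by (auto simp: levi_V_def)
    then have "nbrs (levi_V n) (levi_E n) w = Inl ` t"
      using Inr by (auto simp: nbrs_def levi_V_def triples_def subset_iff)
    then show ?thesis
      using t by (simp add: card_image triples_def)
  qed
qed

theorem proposition2p2:
  fixes n :: nat
  assumes "n \<ge> 4"
  shows "euler_genus (levi_V n) (levi_E n)
           \<ge> \<lceil>real ((n - 2) * (n + 3) * (n - 4)) / 12\<rceil>"
proof -
  let ?g = "euler_genus (levi_V n) (levi_E n)" and ?C = "n choose 3"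
  have "8 - 4 * int n + 2 * int ?C \<le> 4 * ?g"
    using euler_genus_bipartite_lower_bound[OF finite_levi_V levi_E_sym levi_E_bipartite
        levi_min_degree[OF assms]]
    by (simp add: card_levi_V card_graph_edges_levi card_darts_levi algebra_simps)
  moreover obtain m where "n = m + 4"
    using assms by (metis add.commute le_Suc_ex)
  then have "int ((n - 2) * (n + 3) * (n - 4)) = 24 - 12 * int n + int (6 * ?C)"
    unfolding six_choose_three by (simp add: algebra_simps)
  ultimately have "int ((n - 2) * (n + 3) * (n - 4)) \<le> 12 * ?g"
    by linarith
  then have "real ((n - 2) * (n + 3) * (n - 4)) \<le> 12 * real_of_int ?g"
    using of_int_le_iff[where 'a = real, THEN iffD2] by fastforce
  then show ?thesis
    by (simp add: ceiling_le_iff)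
qed

end
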